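(* Let $h:\mathbb{R}\to\mathbb{R}$ be of class $C^1$, let $x_0\in\mathbb{R}$, and let $\Phi$ be a real function of class $C^2$ on an interval $]x_-,x_+[$ with $x_-<x_0<x_+$, such that $h(x)\neq\Phi^2(x)$ for all $x\in]x_-,x_+[$. Define on $]x_-,x_+[$ \[ u_{\mathtt{top}}(x)=\exp\left[\int_{x_0}^{x}d\xi\,\Phi(\xi)\frac{\Phi'(\xi)-\sqrt{\left[h(\xi)-\Phi^{2}(\xi)\right]^{2}+\left[\Phi'(\xi)\right]^{2}}}{h(\xi)-\Phi^{2}(\xi)}\right], \] \[ u_{\mathtt{bot}}(x)=\exp\left[\int_{x_0}^{x}d\xi\,\Phi(\xi)\frac{\Phi'(\xi)+\sqrt{\left[h(\xi)-\Phi^{2}(\xi)\right]^{2}+\left[\Phi'(\xi)\right]^{2}}}{h(\xi)-\Phi^{2}(\xi)}\right]. \] Then $u(x)=A\,u_{\mathtt{top}}(x)+B\,u_{\mathtt{bot}}(x)$, with $A,B$ arbitrary constants, is the general solution of $u''(x)+h(x)u(x)=0$ on $]x_-,x_+[$ if and only if $\Phi$ satisfies on $]x_-,x_+[$ the equation \[ \Phi''(x)=\frac{3\Phi^{2}(x)+h(x)}{\Phi^{2}(x)-h(x)}\frac{\left[\Phi'(x)\right]^{2}}{\Phi(x)}-\frac{h'(x)\Phi'(x)}{\Phi^{2}(x)-h(x)}+\frac{\Phi^{4}(x)-h^{2}(x)}{\Phi(x)}. \]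
   Context: The equation for $\Phi$ is the equation satisfied by geodesic curves, written in explicit form $\varPhi=\Phi(x)$, of the Riemannian metric $g_h=\left[(h(x)-\varPhi^2)^2dx^2+d\varPhi^2\right]/\varPhi^2$ on $\{(x,\varPhi)\mid\varPhi>0,\ \varPhi^2\neq h(x)\}$, a metric of constant curvature $-1$. *)

theory Defs
  imports "HOL-Analysis.Analysis"
begin

definition oint :: "(real \<Rightarrow> real) \<Rightarrow> real \<Rightarrow> real \<Rightarrow> real" where
  "oint f a b = (if a \<le> b then integral {a..b} f else - integral {b..a} f)"

definition solves_ode :: "(real \<Rightarrow> real) \<Rightarrow> real \<Rightarrow> real \<Rightarrow> (real \<Rightarrow> real) \<Rightarrow> bool" where
  "solves_ode h a b u \<longleftrightarrow>
     (\<forall>x\<in>{a<..<b}. u differentiable (at x) \<and>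
        ((deriv u) has_real_derivative (- h x * u x)) (at x))"

definition general_solution :: "(real \<Rightarrow> real) \<Rightarrow> real \<Rightarrow> real \<Rightarrow> (real \<Rightarrow> real) \<Rightarrow> (real \<Rightarrow> real) \<Rightarrow> bool" where
  "general_solution h a b u1 u2 \<longleftrightarrow>
     (\<forall>A B. solves_ode h a b (\<lambda>x. A * u1 x + B * u2 x)) \<and>
     (\<forall>u. solves_ode h a b u \<longrightarrow> (\<exists>A B. \<forall>x\<in>{a<..<b}. u x = A * u1 x + B * u2 x))"

end

theory Submission
  imports Defs
begin

text \<open>Substituting \<open>u = exp (\<integral> f)\<close> turns \<open>u'' + h u = 0\<close> into the Riccati equation
  \<open>f' + f\<^sup>2 + h = 0\<close>. For the two branches \<open>f\<^sub>\<epsilon> = \<Phi> (\<Phi>' + \<epsilon> S) / (h - \<Phi>\<^sup>2)\<close>,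
  \<open>S = sqrt ((h - \<Phi>\<^sup>2)\<^sup>2 + \<Phi>'\<^sup>2)\<close>, \<open>\<epsilon> = \<plusminus>1\<close>, a direct computation gives
  \<open>f\<^sub>\<epsilon>' + f\<^sub>\<epsilon>\<^sup>2 + h = (\<epsilon> f\<^sub>\<epsilon> / S) (\<Phi>'' - R)\<close>, where \<open>R\<close> is the right-hand side of the
  geodesic equation; and \<open>f\<^sub>\<epsilon> \<noteq> 0\<close> because \<open>|\<Phi>'| < S\<close>. So each of \<open>u\<^sub>t\<^sub>o\<^sub>p\<close>, \<open>u\<^sub>b\<^sub>o\<^sub>t\<close>
  solves the equation exactly when \<open>\<Phi>\<close> is a geodesic. In that case both are solutions whose
  Wronskian at \<open>x\<^sub>0\<close> is \<open>f\<^sub>+ - f\<^sub>- = 2 \<Phi> S / (h - \<Phi>\<^sup>2) \<noteq> 0\<close>; since the Wronskian of two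
  solutions is constant, they span all solutions.\<close>

lemma C1_differentiable_on_has_real_derivative:
  fixes f :: "real \<Rightarrow> real"
  assumes "f C1_differentiable_on S" "x \<in> S"
  shows "(f has_real_derivative deriv f x) (at x)"
  using assms by (simp add: C1_differentiable_on_eq DERIV_deriv_iff_real_differentiable)

definition wronskian :: "(real \<Rightarrow> real) \<Rightarrow> (real \<Rightarrow> real) \<Rightarrow> real \<Rightarrow> real" where
  "wronskian u v x = u x * deriv v x - deriv u x * v x"

lemma solves_odeD:
  assumes "solves_ode h a b u" "x \<in> {a<..<b}"
  shows "(u has_real_derivative deriv u x) (at x)"
    and "(deriv u has_real_derivative - h x * u x) (at x)"
  using assms unfolding solves_ode_def DERIV_deriv_iff_real_differentiable[symmetric] by blast+

lemma solves_odeI: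
  assumes "\<And>x. x \<in> {a<..<b} \<Longrightarrow> (u has_real_derivative u' x) (at x)"
    and "\<And>x. x \<in> {a<..<b} \<Longrightarrow> (u' has_real_derivative - h x * u x) (at x)"
  shows "solves_ode h a b u"
  unfolding solves_ode_def
proof (intro ballI conjI)
  fix x assume x: "x \<in> {a<..<b}"
  show "u differentiable (at x)"
    using assms(1)[OF x] real_differentiable_def by blast
  have deriv_u: "deriv u y = u' y" if "y \<in> {a<..<b}" for y
    using assms(1)[OF that] by (rule DERIV_imp_deriv)
  show "(deriv u has_real_derivative - h x * u x) (at x)"
    by (rule has_field_derivative_transform_within_open[OF assms(2)[OF x], of "{a<..<b}"])
       (use x deriv_u in auto)
qed

lemma solves_ode_lincomb:
  assumes "solves_ode h a b u" "solves_ode h a b v"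
  shows "solves_ode h a b (\<lambda>x. A * u x + B * v x)"
proof (rule solves_odeI)
  fix x assume x: "x \<in> {a<..<b}"
  show "((\<lambda>x. A * u x + B * v x) has_real_derivative A * deriv u x + B * deriv v x) (at x)"
    using solves_odeD(1)[OF assms(1) x] solves_odeD(1)[OF assms(2) x]
    by (auto intro!: derivative_eq_intros)
  show "((\<lambda>x. A * deriv u x + B * deriv v x) has_real_derivative - h x * (A * u x + B * v x)) (at x)"
    using solves_odeD(2)[OF assms(1) x] solves_odeD(2)[OF assms(2) x]
    by (auto intro!: derivative_eq_intros simp: algebra_simps)
qed

lemma wronskian_constant:
  assumes "solves_ode h a b u" "solves_ode h a b v"
  obtains c where "\<And>x. x \<in> {a<..<b} \<Longrightarrow> wronskian u v x = c"
proof -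
  have "\<exists>c. \<forall>x\<in>{a<..<b}. wronskian u v x = c"
  proof (rule has_field_derivative_zero_constant)
    fix x assume x: "x \<in> {a<..<b}"
    have "(wronskian u v has_real_derivative 0) (at x)"
      unfolding wronskian_def[abs_def]
      using solves_odeD[OF assms(1) x] solves_odeD[OF assms(2) x]
      by (auto intro!: derivative_eq_intros simp: algebra_simps)
    then show "(wronskian u v has_real_derivative 0) (at x within {a<..<b})"
      by (rule has_field_derivative_at_within)
  qed (rule convex_real_interval)
  then show ?thesis using that by blast
qed

lemma solves_ode_in_span:
  assumes u: "solves_ode h a b u1" "solves_ode h a b u2" and v: "solves_ode h a b v"
    and x1: "x1 \<in> {a<..<b}" "wronskian u1 u2 x1 \<noteq> 0"
  shows "\<exists>A B. \<forall>x\<in>{a<..<b}. v x = A * u1 x + B * u2 x"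
proof -
  obtain c where c: "\<And>x. x \<in> {a<..<b} \<Longrightarrow> wronskian u1 u2 x = c"
    using wronskian_constant[OF u] by blast
  obtain c1 where c1: "\<And>x. x \<in> {a<..<b} \<Longrightarrow> wronskian v u2 x = c1"
    using wronskian_constant[OF v u(2)] by blast
  obtain c2 where c2: "\<And>x. x \<in> {a<..<b} \<Longrightarrow> wronskian u1 v x = c2"
    using wronskian_constant[OF u(1) v] by blast
  have "c \<noteq> 0" using c x1 by metis
  have "v x = c1 / c * u1 x + c2 / c * u2 x" if x: "x \<in> {a<..<b}" for x
  proof -
    have "v x * wronskian u1 u2 x = wronskian v u2 x * u1 x + wronskian u1 v x * u2 x"
      by (simp add: wronskian_def algebra_simps)
    then show ?thesis using c[OF x] c1[OF x] c2[OF x] \<open>c \<noteq> 0\<close> by (simp add: field_simps)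
  qed
  then show ?thesis by blast
qed

lemma general_solutionI:
  assumes "solves_ode h a b u1" "solves_ode h a b u2"
    and "x1 \<in> {a<..<b}" "wronskian u1 u2 x1 \<noteq> 0"
  shows "general_solution h a b u1 u2"
  unfolding general_solution_def
  using solves_ode_lincomb[OF assms(1,2)] solves_ode_in_span[OF assms(1,2) _ assms(3,4)] by blast

lemma oint_eq_integral_diff:
  fixes f :: "real \<Rightarrow> real"
  assumes f: "f integrable_on {c..d}" and "x0 \<in> {c..d}" "y \<in> {c..d}"
  shows "oint f x0 y = integral {c..y} f - integral {c..x0} f"
proof (cases "x0 \<le> y")
  case True
  have "f integrable_on {c..y}" using integrable_on_subinterval[OF f] assms by auto
  then have "integral {c..x0} f + integral {x0..y} f = integral {c..y} f"
    using Henstock_Kurzweil_Integration.integral_combine[of c x0 y f] True assms by auto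
  then show ?thesis using True unfolding oint_def by simp
next
  case False
  have "f integrable_on {c..x0}" using integrable_on_subinterval[OF f] assms by auto
  then have "integral {c..y} f + integral {y..x0} f = integral {c..x0} f"
    using Henstock_Kurzweil_Integration.integral_combine[of c y x0 f] False assms by auto
  then show ?thesis using False unfolding oint_def by simp
qed

lemma oint_has_real_derivative:
  fixes f :: "real \<Rightarrow> real"
  assumes f: "continuous_on {a<..<b} f" and x0: "x0 \<in> {a<..<b}" and x: "x \<in> {a<..<b}"
  shows "(oint f x0 has_real_derivative f x) (at x)"
proof -
  define c where "c = (a + min x x0) / 2"
  define d where "d = (b + max x x0) / 2"
  have cd: "a < c" "c < x" "c < x0" "d < b" "x < d" "x0 < d"
    using x x0 unfolding c_def d_def by auto
  then have f_cd: "continuous_on {c..d} f"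
    using continuous_on_subset[OF f] by (meson greaterThanLessThan_iff atLeastAtMost_iff
        order.strict_trans1 order.strict_trans2 subsetI)
  have "((\<lambda>y. integral {c..y} f) has_real_derivative f x) (at x)"
    using integral_has_real_derivative[OF f_cd, of x] at_within_Icc_at[of c x d] cd by auto
  then have "((\<lambda>y. integral {c..y} f - integral {c..x0} f) has_real_derivative f x) (at x)"
    by (auto intro!: derivative_eq_intros)
  then show ?thesis
    by (rule has_field_derivative_transform_within_open[of _ _ _ "{c<..<d}"])
       (use cd oint_eq_integral_diff[OF integrable_continuous_real[OF f_cd]] in auto)
qed

lemma exp_oint_has_real_derivative:
  fixes f :: "real \<Rightarrow> real"
  assumes "continuous_on {a<..<b} f" "x0 \<in> {a<..<b}" "x \<in> {a<..<b}"
  shows "((\<lambda>y. exp (oint f x0 y)) has_real_derivative f x * exp (oint f x0 x)) (at x)"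
  using DERIV_chain2[OF DERIV_exp oint_has_real_derivative[OF assms]] by (simp add: mult.commute)

lemma solves_ode_exp_oint_iff_riccati:
  fixes f h :: "real \<Rightarrow> real"
  assumes f: "\<And>x. x \<in> {a<..<b} \<Longrightarrow> f differentiable (at x)" and x0: "x0 \<in> {a<..<b}"
  shows "solves_ode h a b (\<lambda>y. exp (oint f x0 y)) \<longleftrightarrow>
         (\<forall>x\<in>{a<..<b}. (f has_real_derivative - (f x)\<^sup>2 - h x) (at x))"
    (is "solves_ode h a b ?u \<longleftrightarrow> _")
proof -
  have "continuous_on {a<..<b} f"
    using f by (meson continuous_at_imp_continuous_on differentiable_imp_continuous_within)
  then have u': "(?u has_real_derivative f x * ?u x) (at x)" if "x \<in> {a<..<b}" for x
    using exp_oint_has_real_derivative x0 that by blast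
  have f': "(f has_real_derivative deriv f x) (at x)" if "x \<in> {a<..<b}" for x
    using f[OF that] DERIV_deriv_iff_real_differentiable by blast
  show ?thesis
  proof
    assume u: "solves_ode h a b ?u"
    show "\<forall>x\<in>{a<..<b}. (f has_real_derivative - (f x)\<^sup>2 - h x) (at x)"
    proof
      fix x assume x: "x \<in> {a<..<b}"
      have "deriv ?u y = f y * ?u y" if "y \<in> {a<..<b}" for y
        using u'[OF that] by (rule DERIV_imp_deriv)
      then have "((\<lambda>y. f y * ?u y) has_real_derivative - h x * ?u x) (at x)"
        using has_field_derivative_transform_within_open[OF solves_odeD(2)[OF u x], of "{a<..<b}"] x
        by auto
      moreover have "((\<lambda>y. f y * ?u y) has_real_derivative (deriv f x + (f x)\<^sup>2) * ?u x) (at x)"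
        using DERIV_mult[OF f'[OF x] u'[OF x]] by (simp add: algebra_simps power2_eq_square)
      ultimately have "(deriv f x + (f x)\<^sup>2) * ?u x = - h x * ?u x"
        by (rule DERIV_unique[rotated])
      then have "(deriv f x + (f x)\<^sup>2 + h x) * ?u x = 0" by (simp add: algebra_simps)
      then have "deriv f x = - (f x)\<^sup>2 - h x" by simp
      then show "(f has_real_derivative - (f x)\<^sup>2 - h x) (at x)" using f'[OF x] by simp
    qed
  next
    assume riccati: "\<forall>x\<in>{a<..<b}. (f has_real_derivative - (f x)\<^sup>2 - h x) (at x)"
    show "solves_ode h a b ?u"
    proof (rule solves_odeI[OF u'])
      fix x assume x: "x \<in> {a<..<b}"
      show "((\<lambda>y. f y * ?u y) has_real_derivative - h x * ?u x) (at x)"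
        using DERIV_mult[OF bspec[OF riccati x] u'[OF x]] by (simp add: algebra_simps power2_eq_square)
    qed
  qed
qed

text \<open>The paper's \<open>u\<^sub>t\<^sub>o\<^sub>p\<close> and \<open>u\<^sub>b\<^sub>o\<^sub>t\<close> are \<open>exp\<close> of the oriented integral of
  \<open>riccati_branch h \<Phi> (-1)\<close> and \<open>riccati_branch h \<Phi> 1\<close>.\<close>
definition riccati_branch :: "(real \<Rightarrow> real) \<Rightarrow> (real \<Rightarrow> real) \<Rightarrow> real \<Rightarrow> real \<Rightarrow> real" where
  "riccati_branch h \<Phi> \<epsilon> \<xi> =
     \<Phi> \<xi> * (deriv \<Phi> \<xi> + \<epsilon> * sqrt ((h \<xi> - (\<Phi> \<xi>)\<^sup>2)\<^sup>2 + (deriv \<Phi> \<xi>)\<^sup>2)) / (h \<xi> - (\<Phi> \<xi>)\<^sup>2)"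

definition geodesic_rhs :: "(real \<Rightarrow> real) \<Rightarrow> (real \<Rightarrow> real) \<Rightarrow> real \<Rightarrow> real" where
  "geodesic_rhs h \<Phi> x =
     (3 * (\<Phi> x)\<^sup>2 + h x) / ((\<Phi> x)\<^sup>2 - h x) * (deriv \<Phi> x)\<^sup>2 / \<Phi> x
     - deriv h x * deriv \<Phi> x / ((\<Phi> x)\<^sup>2 - h x) + ((\<Phi> x)^4 - (h x)\<^sup>2) / \<Phi> x"

text \<open>In the variables \<open>p = \<Phi> x, q = \<Phi>' x, r = \<Phi>'' x, k = h x, dk = h' x\<close>, the left-hand side is
  \<open>f' + f\<^sup>2 + h\<close> for the branch \<open>f = p (q + \<epsilon> s) / (k - p\<^sup>2)\<close>, with \<open>f'\<close> expanded by the quotient rule.\<close>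
lemma riccati_branch_residual:
  fixes p q r k dk \<epsilon> :: real
  assumes "\<epsilon>\<^sup>2 = 1" "k \<noteq> p\<^sup>2" "p \<noteq> 0"
  defines "s \<equiv> sqrt ((k - p\<^sup>2)\<^sup>2 + q\<^sup>2)"
  shows "((q * (q + \<epsilon> * s) + p * (r + \<epsilon> * (((k - p\<^sup>2) * (dk - 2 * p * q) + q * r) / s))) * (k - p\<^sup>2)
          - p * (q + \<epsilon> * s) * (dk - 2 * p * q)) / (k - p\<^sup>2)\<^sup>2
         + (p * (q + \<epsilon> * s) / (k - p\<^sup>2))\<^sup>2 + k
       = \<epsilon> * (p * (q + \<epsilon> * s) / (k - p\<^sup>2)) / s
         * (r - ((3 * p\<^sup>2 + k) / (p\<^sup>2 - k) * q\<^sup>2 / p - dk * q / (p\<^sup>2 - k) + (p ^ 4 - k\<^sup>2) / p))"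
proof -
  define G where "G = k - p\<^sup>2"
  have G: "G \<noteq> 0" "k = G + p\<^sup>2" "p\<^sup>2 - k = - G" using assms(2) by (auto simp: G_def)
  then have "s \<noteq> 0" and s_sq: "s\<^sup>2 = G\<^sup>2 + q\<^sup>2"
    unfolding s_def G_def[symmetric] by (simp_all add: add_pos_nonneg)
  have "\<epsilon> = 1 \<or> \<epsilon> = -1" using assms(1) by (simp add: power2_eq_1_iff)
  then show ?thesis unfolding G_def[symmetric] G(3) using G(1) \<open>s \<noteq> 0\<close> s_sq assms(3)
    by (elim disjE; simp add: G(2) field_simps; algebra)
qed

lemma riccati_branch_has_real_derivative:
  fixes h \<Phi> :: "real \<Rightarrow> real" and \<epsilon> x :: real
  assumes \<Phi>': "(\<Phi> has_real_derivative deriv \<Phi> x) (at x)"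
    and \<Phi>'': "(deriv \<Phi> has_real_derivative deriv (deriv \<Phi>) x) (at x)"
    and h': "(h has_real_derivative deriv h x) (at x)"
    and \<epsilon>: "\<epsilon>\<^sup>2 = 1" and h\<Phi>: "h x \<noteq> (\<Phi> x)\<^sup>2" and \<Phi>: "\<Phi> x \<noteq> 0"
  defines "s \<equiv> sqrt ((h x - (\<Phi> x)\<^sup>2)\<^sup>2 + (deriv \<Phi> x)\<^sup>2)"
  shows "(riccati_branch h \<Phi> \<epsilon> has_real_derivative
           - (riccati_branch h \<Phi> \<epsilon> x)\<^sup>2 - h x
           + \<epsilon> * riccati_branch h \<Phi> \<epsilon> x / s * (deriv (deriv \<Phi>) x - geodesic_rhs h \<Phi> x)) (at x)"
proof -
  define G where "G \<xi> = h \<xi> - (\<Phi> \<xi>)\<^sup>2" for \<xi>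
  define S where "S \<xi> = sqrt ((G \<xi>)\<^sup>2 + (deriv \<Phi> \<xi>)\<^sup>2)" for \<xi>
  have "G x \<noteq> 0" using h\<Phi> by (simp add: G_def)
  then have "(G x)\<^sup>2 + (deriv \<Phi> x)\<^sup>2 > 0" by (simp add: add_pos_nonneg)
  have G': "(G has_real_derivative deriv h x - 2 * \<Phi> x * deriv \<Phi> x) (at x)"
    unfolding G_def[abs_def] using \<Phi>' h' by (auto intro!: derivative_eq_intros)
  have S': "(S has_real_derivative
      (G x * (deriv h x - 2 * \<Phi> x * deriv \<Phi> x) + deriv \<Phi> x * deriv (deriv \<Phi>) x) / S x) (at x)"
    unfolding S_def[abs_def] using G' \<Phi>'' \<open>_ > 0\<close>
    by (auto intro!: derivative_eq_intros simp: divide_simps algebra_simps)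
  have branch: "riccati_branch h \<Phi> \<epsilon> = (\<lambda>\<xi>. \<Phi> \<xi> * (deriv \<Phi> \<xi> + \<epsilon> * S \<xi>) / G \<xi>)"
    by (simp add: fun_eq_iff riccati_branch_def G_def S_def)
  have "((\<lambda>\<xi>. \<Phi> \<xi> * (deriv \<Phi> \<xi> + \<epsilon> * S \<xi>) / G \<xi>) has_real_derivative
      ((deriv \<Phi> x * (deriv \<Phi> x + \<epsilon> * S x) + \<Phi> x * (deriv (deriv \<Phi>) x
        + \<epsilon> * ((G x * (deriv h x - 2 * \<Phi> x * deriv \<Phi> x) + deriv \<Phi> x * deriv (deriv \<Phi>) x) / S x))) * G x
       - \<Phi> x * (deriv \<Phi> x + \<epsilon> * S x) * (deriv h x - 2 * \<Phi> x * deriv \<Phi> x)) / (G x)\<^sup>2) (at x)"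
    using \<Phi>' \<Phi>'' G' S' \<open>G x \<noteq> 0\<close> by (auto intro!: derivative_eq_intros simp: power2_eq_square)
  then show ?thesis
    unfolding branch
    by (rule DERIV_cong)
       (use riccati_branch_residual[OF \<epsilon> h\<Phi> \<Phi>, of "deriv \<Phi> x" "deriv (deriv \<Phi>) x" "deriv h x"]
        in \<open>unfold G_def S_def s_def geodesic_rhs_def, linarith\<close>)
qed

lemma riccati_branch_nonzero:
  fixes h \<Phi> :: "real \<Rightarrow> real" and \<epsilon> x :: real
  assumes "\<epsilon>\<^sup>2 = 1" "h x \<noteq> (\<Phi> x)\<^sup>2" "\<Phi> x \<noteq> 0"
  shows "riccati_branch h \<Phi> \<epsilon> x \<noteq> 0"
proof -
  define s where "s = sqrt ((h x - (\<Phi> x)\<^sup>2)\<^sup>2 + (deriv \<Phi> x)\<^sup>2)"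
  have "(deriv \<Phi> x)\<^sup>2 < s\<^sup>2"
    using assms(2) by (simp add: s_def add_pos_nonneg)
  moreover have "deriv \<Phi> x + \<epsilon> * s = 0 \<Longrightarrow> (deriv \<Phi> x)\<^sup>2 = s\<^sup>2"
    using assms(1) by (simp add: eq_neg_iff_add_eq_0[symmetric] power_mult_distrib)
  ultimately show ?thesis
    using assms(2,3) by (auto simp: riccati_branch_def s_def[symmetric])
qed

lemma riccati_branch_riccati_iff:
  fixes h \<Phi> :: "real \<Rightarrow> real" and \<epsilon> x :: real
  assumes "(\<Phi> has_real_derivative deriv \<Phi> x) (at x)"
    and "(deriv \<Phi> has_real_derivative deriv (deriv \<Phi>) x) (at x)"
    and "(h has_real_derivative deriv h x) (at x)"
    and \<epsilon>: "\<epsilon>\<^sup>2 = 1" and h\<Phi>: "h x \<noteq> (\<Phi> x)\<^sup>2" and \<Phi>: "\<Phi> x \<noteq> 0"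
  shows "(riccati_branch h \<Phi> \<epsilon> has_real_derivative - (riccati_branch h \<Phi> \<epsilon> x)\<^sup>2 - h x) (at x)
         \<longleftrightarrow> deriv (deriv \<Phi>) x = geodesic_rhs h \<Phi> x"
proof -
  define s where "s = sqrt ((h x - (\<Phi> x)\<^sup>2)\<^sup>2 + (deriv \<Phi> x)\<^sup>2)"
  define f where "f = riccati_branch h \<Phi> \<epsilon>"
  define c where "c = \<epsilon> * f x / s"
  have "s \<noteq> 0" using h\<Phi> by (simp add: s_def add_pos_nonneg)
  moreover have "\<epsilon> \<noteq> 0" using \<epsilon> by auto
  ultimately have "c \<noteq> 0"
    using riccati_branch_nonzero[of \<epsilon> h x \<Phi>] \<epsilon> h\<Phi> \<Phi> by (simp add: c_def f_def)
  have f': "(f has_real_derivative - (f x)\<^sup>2 - h x + c * (deriv (deriv \<Phi>) x - geodesic_rhs h \<Phi> x)) (at x)"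
    unfolding f_def c_def s_def by (rule riccati_branch_has_real_derivative[OF assms])
  have "(f has_real_derivative - (f x)\<^sup>2 - h x) (at x)
        \<longleftrightarrow> c * (deriv (deriv \<Phi>) x - geodesic_rhs h \<Phi> x) = 0"
  proof
    assume "(f has_real_derivative - (f x)\<^sup>2 - h x) (at x)"
    from DERIV_unique[OF f' this] show "c * (deriv (deriv \<Phi>) x - geodesic_rhs h \<Phi> x) = 0" by simp
  next
    assume "c * (deriv (deriv \<Phi>) x - geodesic_rhs h \<Phi> x) = 0"
    with f' show "(f has_real_derivative - (f x)\<^sup>2 - h x) (at x)" by simp
  qed
  also have "\<dots> \<longleftrightarrow> deriv (deriv \<Phi>) x = geodesic_rhs h \<Phi> x" using \<open>c \<noteq> 0\<close> by simp
  finally show ?thesis unfolding f_def .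
qed

lemma riccati_branches_differ:
  fixes h \<Phi> :: "real \<Rightarrow> real" and x :: real
  assumes "h x \<noteq> (\<Phi> x)\<^sup>2" "\<Phi> x \<noteq> 0"
  shows "riccati_branch h \<Phi> 1 x \<noteq> riccati_branch h \<Phi> (-1) x"
proof -
  define s where "s = sqrt ((h x - (\<Phi> x)\<^sup>2)\<^sup>2 + (deriv \<Phi> x)\<^sup>2)"
  have "s \<noteq> 0" using assms(1) by (simp add: s_def add_pos_nonneg)
  have "riccati_branch h \<Phi> 1 x - riccati_branch h \<Phi> (-1) x = 2 * \<Phi> x * s / (h x - (\<Phi> x)\<^sup>2)"
    unfolding riccati_branch_def s_def[symmetric] by (simp add: diff_divide_distrib[symmetric] algebra_simps)
  then show ?thesis using assms \<open>s \<noteq> 0\<close> by auto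
qed

lemma wronskian_exp_oint:
  fixes f g :: "real \<Rightarrow> real"
  assumes "continuous_on {a<..<b} f" "continuous_on {a<..<b} g" "x0 \<in> {a<..<b}"
  shows "wronskian (\<lambda>y. exp (oint f x0 y)) (\<lambda>y. exp (oint g x0 y)) x0 = g x0 - f x0"
  using exp_oint_has_real_derivative[OF assms(1,3,3)] exp_oint_has_real_derivative[OF assms(2,3,3)]
  by (simp add: wronskian_def DERIV_imp_deriv oint_def)

lemma solves_ode_exp_oint_riccati_branch_iff:
  fixes h \<Phi> :: "real \<Rightarrow> real" and \<epsilon> x0 a b :: real
  assumes \<Phi>': "\<And>x. x \<in> {a<..<b} \<Longrightarrow> (\<Phi> has_real_derivative deriv \<Phi> x) (at x)"
    and \<Phi>'': "\<And>x. x \<in> {a<..<b} \<Longrightarrow> (deriv \<Phi> has_real_derivative deriv (deriv \<Phi>) x) (at x)"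
    and h': "\<And>x. x \<in> {a<..<b} \<Longrightarrow> (h has_real_derivative deriv h x) (at x)"
    and h\<Phi>: "\<And>x. x \<in> {a<..<b} \<Longrightarrow> h x \<noteq> (\<Phi> x)\<^sup>2"
    and \<Phi>: "\<And>x. x \<in> {a<..<b} \<Longrightarrow> \<Phi> x \<noteq> 0"
    and \<epsilon>: "\<epsilon>\<^sup>2 = 1" and x0: "x0 \<in> {a<..<b}"
  shows "solves_ode h a b (\<lambda>y. exp (oint (riccati_branch h \<Phi> \<epsilon>) x0 y))
         \<longleftrightarrow> (\<forall>x\<in>{a<..<b}. deriv (deriv \<Phi>) x = geodesic_rhs h \<Phi> x)"
proof -
  have diff: "riccati_branch h \<Phi> \<epsilon> differentiable (at x)" if "x \<in> {a<..<b}" for x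
    using riccati_branch_has_real_derivative[OF \<Phi>'[OF that] \<Phi>''[OF that] h'[OF that] \<epsilon> h\<Phi>[OF that] \<Phi>[OF that]]
    by (auto simp: real_differentiable_def)
  have "solves_ode h a b (\<lambda>y. exp (oint (riccati_branch h \<Phi> \<epsilon>) x0 y)) \<longleftrightarrow>
      (\<forall>x\<in>{a<..<b}. (riccati_branch h \<Phi> \<epsilon> has_real_derivative
                        - (riccati_branch h \<Phi> \<epsilon> x)\<^sup>2 - h x) (at x))"
    by (rule solves_ode_exp_oint_iff_riccati[OF diff x0])
  also have "\<dots> \<longleftrightarrow> (\<forall>x\<in>{a<..<b}. deriv (deriv \<Phi>) x = geodesic_rhs h \<Phi> x)"
  proof (rule ball_cong[OF refl])
    fix x assume x: "x \<in> {a<..<b}"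
    show "(riccati_branch h \<Phi> \<epsilon> has_real_derivative - (riccati_branch h \<Phi> \<epsilon> x)\<^sup>2 - h x) (at x)
          \<longleftrightarrow> deriv (deriv \<Phi>) x = geodesic_rhs h \<Phi> x"
      by (rule riccati_branch_riccati_iff[OF \<Phi>'[OF x] \<Phi>''[OF x] h'[OF x] \<epsilon> h\<Phi>[OF x] \<Phi>[OF x]])
  qed
  finally show ?thesis .
qed

lemma general_solution_riccati_branches_iff:
  fixes h \<Phi> :: "real \<Rightarrow> real" and x0 a b :: real
  assumes \<Phi>': "\<And>x. x \<in> {a<..<b} \<Longrightarrow> (\<Phi> has_real_derivative deriv \<Phi> x) (at x)"
    and \<Phi>'': "\<And>x. x \<in> {a<..<b} \<Longrightarrow> (deriv \<Phi> has_real_derivative deriv (deriv \<Phi>) x) (at x)"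
    and h': "\<And>x. x \<in> {a<..<b} \<Longrightarrow> (h has_real_derivative deriv h x) (at x)"
    and h\<Phi>: "\<And>x. x \<in> {a<..<b} \<Longrightarrow> h x \<noteq> (\<Phi> x)\<^sup>2"
    and \<Phi>: "\<And>x. x \<in> {a<..<b} \<Longrightarrow> \<Phi> x \<noteq> 0"
    and x0: "x0 \<in> {a<..<b}"
  shows "general_solution h a b (\<lambda>x. exp (oint (riccati_branch h \<Phi> (-1)) x0 x))
                                 (\<lambda>x. exp (oint (riccati_branch h \<Phi> 1) x0 x))
         \<longleftrightarrow> (\<forall>x\<in>{a<..<b}. deriv (deriv \<Phi>) x = geodesic_rhs h \<Phi> x)"
    (is "general_solution h a b (?u (-1)) (?u 1) \<longleftrightarrow> ?geodesic")
proof
  assume "general_solution h a b (?u (-1)) (?u 1)"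
  then have "solves_ode h a b (\<lambda>x. 1 * ?u (-1) x + 0 * ?u 1 x)"
    unfolding general_solution_def by blast
  then show ?geodesic
    using solves_ode_exp_oint_riccati_branch_iff[OF \<Phi>' \<Phi>'' h' h\<Phi> \<Phi> _ x0, of "-1"] by simp
next
  assume ?geodesic
  then have solves: "solves_ode h a b (?u \<epsilon>)" if "\<epsilon>\<^sup>2 = 1" for \<epsilon>
    using solves_ode_exp_oint_riccati_branch_iff[OF \<Phi>' \<Phi>'' h' h\<Phi> \<Phi> that x0] by simp
  have "continuous_on {a<..<b} (riccati_branch h \<Phi> \<epsilon>)" if \<epsilon>: "\<epsilon>\<^sup>2 = 1" for \<epsilon>
  proof (intro continuous_at_imp_continuous_on ballI)
    fix x assume x: "x \<in> {a<..<b}"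
    show "isCont (riccati_branch h \<Phi> \<epsilon>) x"
      using riccati_branch_has_real_derivative[OF \<Phi>'[OF x] \<Phi>''[OF x] h'[OF x] \<epsilon> h\<Phi>[OF x] \<Phi>[OF x]]
      by (rule DERIV_isCont)
  qed
  then have "wronskian (?u (-1)) (?u 1) x0 \<noteq> 0"
    using wronskian_exp_oint[OF _ _ x0] riccati_branches_differ[of h x0 \<Phi>, OF h\<Phi>[OF x0] \<Phi>[OF x0]] by simp
  then show "general_solution h a b (?u (-1)) (?u 1)"
    using general_solutionI[OF solves solves x0] by simp
qed

theorem theorem2p10:
  fixes h \<Phi> :: "real \<Rightarrow> real" and x0 xm xp :: real
  assumes h_C1: "h C1_differentiable_on UNIV"
    and Phi_C2: "\<Phi> C1_differentiable_on {xm<..<xp}" "(deriv \<Phi>) C1_differentiable_on {xm<..<xp}"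
    and x0: "xm < x0" "x0 < xp"
    and hPhi: "\<forall>x\<in>{xm<..<xp}. h x \<noteq> (\<Phi> x)\<^sup>2"
    and Phi_nz: "\<forall>x\<in>{xm<..<xp}. \<Phi> x \<noteq> 0"
  shows "general_solution h xm xp
           (\<lambda>x. exp (oint (\<lambda>\<xi>. \<Phi> \<xi> * (deriv \<Phi> \<xi> - sqrt ((h \<xi> - (\<Phi> \<xi>)\<^sup>2)\<^sup>2 + (deriv \<Phi> \<xi>)\<^sup>2))
                                / (h \<xi> - (\<Phi> \<xi>)\<^sup>2)) x0 x))
           (\<lambda>x. exp (oint (\<lambda>\<xi>. \<Phi> \<xi> * (deriv \<Phi> \<xi> + sqrt ((h \<xi> - (\<Phi> \<xi>)\<^sup>2)\<^sup>2 + (deriv \<Phi> \<xi>)\<^sup>2))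
                                / (h \<xi> - (\<Phi> \<xi>)\<^sup>2)) x0 x))
         \<longleftrightarrow>
         (\<forall>x\<in>{xm<..<xp}.
            deriv (deriv \<Phi>) x =
              (3 * (\<Phi> x)\<^sup>2 + h x) / ((\<Phi> x)\<^sup>2 - h x) * (deriv \<Phi> x)\<^sup>2 / \<Phi> x
              - deriv h x * deriv \<Phi> x / ((\<Phi> x)\<^sup>2 - h x)
              + ((\<Phi> x)^4 - (h x)\<^sup>2) / \<Phi> x)"
proof -
  have "general_solution h xm xp (\<lambda>x. exp (oint (riccati_branch h \<Phi> (-1)) x0 x))
                                  (\<lambda>x. exp (oint (riccati_branch h \<Phi> 1) x0 x))
        \<longleftrightarrow> (\<forall>x\<in>{xm<..<xp}. deriv (deriv \<Phi>) x = geodesic_rhs h \<Phi> x)"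
  proof (rule general_solution_riccati_branches_iff)
    show "(h has_real_derivative deriv h x) (at x)" for x
      using h_C1 by (rule C1_differentiable_on_has_real_derivative) simp
  qed (use C1_differentiable_on_has_real_derivative[OF Phi_C2(1)]
         C1_differentiable_on_has_real_derivative[OF Phi_C2(2)] x0 hPhi Phi_nz in auto)
  then show ?thesis by (simp add: riccati_branch_def[abs_def] geodesic_rhs_def)
qed

end
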